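(* Let $X$ be a fragment of $\mathrm{FO}(\lambda)$ that contains all sentences (i.e. $\mathrm{FO}_0(\lambda)\subseteq X$) and the formula $(x_1=x_2)$. Then every modeling $X$-limit of a sequence of weakly uniform $\lambda$-modelings is weakly uniform.
   Context: For a $\lambda$-structure $\mathbf A$ with domain $A$ and a first-order formula $\phi$ with free variables among $x_1,\dots,x_p$, $\Omega_\phi(\mathbf A)=\{(v_1,\dots,v_p)\in A^p:\mathbf A\models\phi(v_1,\dots,v_p)\}$. A relational sample space is a $\lambda$-structure whose domain is a standard Borel space in which every $\Omega_\phi(\mathbf A)$ is measurable in the product $\sigma$-algebra; a $\lambda$-modeling is a relational sample space with a probability measure $\nu_{\mathbf A}$, and $\langle\phi,\mathbf A\rangle=\nu_{\mathbf A}^p(\Omega_\phi(\mathbf A))$ (a finite structure is a modeling with the discrete $\sigma$-algebra and uniform measure). A sequence $(\mathbf A_n)$ of modelings is $X$-convergent if $\langle\phi,\mathbf A_n\rangle$ converges for each $\phi\in X$, and a modeling $\mathbf L$ is a modeling $X$-limit of it if $\langle\phi,\mathbf L\rangle=\lim_n\langle\phi,\mathbf A_n\rangle$ for all $\phi\in X$. A modeling is weakly uniform if all singletons of its domain have the same measure. *)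

theory Defs
  imports "HOL-Probability.Probability"
begin

text \<open>A relational signature lambda is given by a type 'r of relation symbols together
with an arity function. Variables are natural numbers; the paper's x_1, x_2, ... are
the variables 0, 1, ...\<close>

datatype 'r fo =
    Eq nat nat
  | Rel 'r "nat list"
  | Neg "'r fo"
  | Conj "'r fo" "'r fo"
  | Ex nat "'r fo"

fun fv :: "'r fo \<Rightarrow> nat set" where
  "fv (Eq i j) = {i, j}"
| "fv (Rel r xs) = set xs"
| "fv (Neg \<phi>) = fv \<phi>"
| "fv (Conj \<phi> \<psi>) = fv \<phi> \<union> fv \<psi>"
| "fv (Ex i \<phi>) = fv \<phi> - {i}"

fun wf_fo :: "('r \<Rightarrow> nat) \<Rightarrow> 'r fo \<Rightarrow> bool" where
  "wf_fo ar (Eq i j) = True"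
| "wf_fo ar (Rel r xs) = (length xs = ar r)"
| "wf_fo ar (Neg \<phi>) = wf_fo ar \<phi>"
| "wf_fo ar (Conj \<phi> \<psi>) = (wf_fo ar \<phi> \<and> wf_fo ar \<psi>)"
| "wf_fo ar (Ex i \<phi>) = wf_fo ar \<phi>"

definition FO :: "('r \<Rightarrow> nat) \<Rightarrow> 'r fo set" where
  "FO ar = {\<phi>. wf_fo ar \<phi>}"

definition FO0 :: "('r \<Rightarrow> nat) \<Rightarrow> 'r fo set" where
  "FO0 ar = {\<phi>. wf_fo ar \<phi> \<and> fv \<phi> = {}}"

fun sat :: "'a set \<Rightarrow> ('r \<Rightarrow> 'a list set) \<Rightarrow> (nat \<Rightarrow> 'a) \<Rightarrow> 'r fo \<Rightarrow> bool" where
  "sat D I v (Eq i j) = (v i = v j)"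
| "sat D I v (Rel r xs) = (map v xs \<in> I r)"
| "sat D I v (Neg \<phi>) = (\<not> sat D I v \<phi>)"
| "sat D I v (Conj \<phi> \<psi>) = (sat D I v \<phi> \<and> sat D I v \<psi>)"
| "sat D I v (Ex i \<phi>) = (\<exists>a\<in>D. sat D I (v(i := a)) \<phi>)"

definition is_structure :: "('r \<Rightarrow> nat) \<Rightarrow> 'a set \<Rightarrow> ('r \<Rightarrow> 'a list set) \<Rightarrow> bool" where
  "is_structure ar D I \<longleftrightarrow> D \<noteq> {} \<and> (\<forall>r. \<forall>xs\<in>I r. length xs = ar r \<and> set xs \<subseteq> D)"

definition Omega :: "'a set \<Rightarrow> ('r \<Rightarrow> 'a list set) \<Rightarrow> nat \<Rightarrow> 'r fo \<Rightarrow> (nat \<Rightarrow> 'a) set" where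
  "Omega D I p \<phi> = {v \<in> PiE {..<p} (\<lambda>_. D). sat D I v \<phi>}"

definition standard_borel :: "'a measure \<Rightarrow> bool" where
  "standard_borel M \<longleftrightarrow> (\<exists>T. completely_metrizable_space T \<and> separable_space T \<and>
      topspace T = space M \<and> sets M = sigma_sets (topspace T) {U. openin T U})"

definition relational_sample_space :: "('r \<Rightarrow> nat) \<Rightarrow> 'a measure \<Rightarrow> ('r \<Rightarrow> 'a list set) \<Rightarrow> bool" where
  "relational_sample_space ar M I \<longleftrightarrow> is_structure ar (space M) I \<and> standard_borel M \<and>
     (\<forall>\<phi> p. wf_fo ar \<phi> \<and> fv \<phi> \<subseteq> {..<p} \<longrightarrow>
        Omega (space M) I p \<phi> \<in> sets (PiM {..<p} (\<lambda>_. M)))"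

definition modeling :: "('r \<Rightarrow> nat) \<Rightarrow> 'a measure \<Rightarrow> ('r \<Rightarrow> 'a list set) \<Rightarrow> bool" where
  "modeling ar M I \<longleftrightarrow> relational_sample_space ar M I \<and> prob_space M"

text \<open>The number of variables used to evaluate phi: the least p with fv phi within {..<p}.
(For a probability measure the value does not depend on the choice of such p.)\<close>
definition nvars :: "'r fo \<Rightarrow> nat" where
  "nvars \<phi> = (LEAST p. fv \<phi> \<subseteq> {..<p})"

definition stone :: "'r fo \<Rightarrow> 'a measure \<Rightarrow> ('r \<Rightarrow> 'a list set) \<Rightarrow> real" where
  "stone \<phi> M I = measure (PiM {..<nvars \<phi>} (\<lambda>_. M)) (Omega (space M) I (nvars \<phi>) \<phi>)"

definition weakly_uniform :: "'a measure \<Rightarrow> bool" where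
  "weakly_uniform M \<longleftrightarrow> (\<forall>a\<in>space M. \<forall>b\<in>space M. measure M {a} = measure M {b})"

definition modeling_X_limit ::
  "('r \<Rightarrow> nat) \<Rightarrow> 'r fo set \<Rightarrow> (nat \<Rightarrow> 'a measure \<times> ('r \<Rightarrow> 'a list set)) \<Rightarrow>
   'b measure \<Rightarrow> ('r \<Rightarrow> 'b list set) \<Rightarrow> bool" where
  "modeling_X_limit ar X A L J \<longleftrightarrow>
     (\<forall>n. modeling ar (fst (A n)) (snd (A n))) \<and> modeling ar L J \<and>
     (\<forall>\<phi>\<in>X. (\<lambda>n. stone \<phi> (fst (A n)) (snd (A n))) \<longlonglongrightarrow> stone \<phi> L J)"

end

theory Submission
  imports Defs
begin

text \<open>
Write \<delta>(M) for the Stone pairing of the formula x1 = x2, i.e. the product measure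
of the diagonal. By Fubini, a weakly uniform modeling whose atoms have mass p has \<delta> = p,
and for every modeling \<delta> dominates the sum of the squared masses of any finitely many atoms.
If L has k distinct points, the sentence "there are at least k elements" holds in L; its
Stone pairing is 0 or 1, so it holds in almost all A n, which forces their atoms to have
mass at most 1/k. Hence \<delta>(L) \<le> 1/k. If L is infinite this gives \<delta>(L) = 0, so all atoms
of L are null. If L has exactly k points, the atom masses sum to 1 and their squares sum to
at most 1/k, which by Cauchy-Schwarz forces every mass to be 1/k.
\<close>

(* Eq 0 0 serves as the formula True (the empty conjunction). *)

fun differs_from :: "nat \<Rightarrow> nat \<Rightarrow> 'r fo" where
  "differs_from i 0 = Eq 0 0"
| "differs_from i (Suc j) = Conj (differs_from i j) (Neg (Eq i j))"

fun distinct_vars :: "nat \<Rightarrow> 'r fo" where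
  "distinct_vars 0 = Eq 0 0"
| "distinct_vars (Suc k) = Conj (distinct_vars k) (differs_from k k)"

fun Ex_upto :: "nat \<Rightarrow> 'r fo \<Rightarrow> 'r fo" where
  "Ex_upto 0 \<phi> = \<phi>"
| "Ex_upto (Suc k) \<phi> = Ex_upto k (Ex k \<phi>)"

definition at_least :: "nat \<Rightarrow> 'r fo" where
  "at_least k = Ex_upto k (distinct_vars k)"

lemma sat_differs_from: "sat D I v (differs_from i j) \<longleftrightarrow> v i \<notin> v ` {..<j}"
  by (induction j) (auto simp: lessThan_Suc)

lemma sat_distinct_vars: "sat D I v (distinct_vars k) \<longleftrightarrow> inj_on v {..<k}"
  by (induction k) (auto simp: lessThan_Suc sat_differs_from)

lemma sat_Ex_upto:
  "sat D I v (Ex_upto k \<phi>) \<longleftrightarrow> (\<exists>u\<in>{..<k} \<rightarrow> D. sat D I (override_on v u {..<k}) \<phi>)"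
proof (induction k arbitrary: \<phi>)
  case (Suc k)
  have upd: "override_on v (u(k := a)) {..<Suc k} = (override_on v u {..<k})(k := a)" for u a
    by (auto simp: override_on_def)
  show ?case
  proof
    assume "sat D I v (Ex_upto (Suc k) \<phi>)"
    then obtain u a where "u \<in> {..<k} \<rightarrow> D" "a \<in> D"
        "sat D I ((override_on v u {..<k})(k := a)) \<phi>"
      using Suc by auto
    then show "\<exists>w\<in>{..<Suc k} \<rightarrow> D. sat D I (override_on v w {..<Suc k}) \<phi>"
      by (intro bexI[of _ "u(k := a)"]) (auto simp: upd less_Suc_eq)
  next
    assume "\<exists>w\<in>{..<Suc k} \<rightarrow> D. sat D I (override_on v w {..<Suc k}) \<phi>"
    then obtain w where w: "w \<in> {..<Suc k} \<rightarrow> D" "sat D I (override_on v w {..<Suc k}) \<phi>"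
      by blast
    then have "sat D I ((override_on v w {..<k})(k := w k)) \<phi>"
      using upd[of w "w k"] by simp
    then show "sat D I v (Ex_upto (Suc k) \<phi>)"
      using Suc w(1) by (auto intro!: bexI[of _ w])
  qed
qed simp

lemma sat_at_least: "sat D I v (at_least k) \<longleftrightarrow> (\<exists>S\<subseteq>D. finite S \<and> card S = k)"
proof -
  have "sat D I v (at_least k) \<longleftrightarrow> (\<exists>u\<in>{..<k} \<rightarrow> D. inj_on u {..<k})"
    unfolding at_least_def sat_Ex_upto sat_distinct_vars
    by (intro bex_cong refl inj_on_cong) (simp add: override_on_def)
  also have "\<dots> \<longleftrightarrow> (\<exists>S\<subseteq>D. finite S \<and> card S = k)"
  proof
    assume "\<exists>u\<in>{..<k} \<rightarrow> D. inj_on u {..<k}"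
    then obtain u where "u ` {..<k} \<subseteq> D" "inj_on u {..<k}" by blast
    then show "\<exists>S\<subseteq>D. finite S \<and> card S = k"
      by (intro exI[of _ "u ` {..<k}"]) (simp add: card_image)
  next
    assume "\<exists>S\<subseteq>D. finite S \<and> card S = k"
    then obtain S h where "S \<subseteq> D" "bij_betw h {..<k} S"
      using ex_bij_betw_nat_finite lessThan_atLeast0 by metis
    then show "\<exists>u\<in>{..<k} \<rightarrow> D. inj_on u {..<k}"
      by (auto simp: bij_betw_def)
  qed
  finally show ?thesis .
qed

lemma fv_differs_from: "fv (differs_from i j) \<subseteq> {0, i} \<union> {..<j}"
  by (induction j) auto

lemma fv_distinct_vars: "0 < k \<Longrightarrow> fv (distinct_vars k) \<subseteq> {..<k}"
proof (induction k)
  case (Suc k)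
  then show ?case
    using fv_differs_from[of k k] by (cases k) auto
qed simp

lemma fv_Ex_upto: "fv (Ex_upto k \<phi>) = fv \<phi> - {..<k}"
  by (induction k arbitrary: \<phi>) (auto simp: lessThan_Suc)

lemma fv_at_least: "0 < k \<Longrightarrow> fv (at_least k) = {}"
  using fv_distinct_vars[of k] by (simp add: at_least_def fv_Ex_upto)

lemma at_least_FO0:
  assumes "0 < k"
  shows "at_least k \<in> FO0 ar"
proof -
  have "wf_fo ar (differs_from i j)" for i j by (induction j) auto
  then have "wf_fo ar (distinct_vars k)" for k by (induction k) auto
  moreover have "wf_fo ar (Ex_upto k \<phi>) = wf_fo ar \<phi>" for k \<phi>
    by (induction k arbitrary: \<phi>) auto
  ultimately show ?thesis
    using fv_at_least[OF assms] unfolding FO0_def at_least_def by simp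
qed

lemma stone_sentence:
  assumes "fv \<phi> = {}"
  shows "stone \<phi> M I = (if sat (space M) I (\<lambda>_. undefined) \<phi> then 1 else 0)"
proof -
  have "nvars \<phi> = 0"
    using assms by (simp add: nvars_def)
  moreover have "Omega (space M) I 0 \<phi> =
      (if sat (space M) I (\<lambda>_. undefined) \<phi> then {\<lambda>_. undefined} else {})"
    by (auto simp: Omega_def)
  ultimately show ?thesis
    by (simp add: stone_def PiM_empty)
qed

lemma modeling_X_limit_sentence_eventually:
  assumes "modeling_X_limit ar X A L J" "\<sigma> \<in> X" "fv \<sigma> = {}"
    and "sat (space L) J (\<lambda>_. undefined) \<sigma>"
  shows "\<forall>\<^sub>F n in sequentially. sat (space (fst (A n))) (snd (A n)) (\<lambda>_. undefined) \<sigma>"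
proof -
  have "(\<lambda>n. stone \<sigma> (fst (A n)) (snd (A n))) \<longlonglongrightarrow> 1"
    using assms stone_sentence[OF assms(3), of L J] by (auto simp: modeling_X_limit_def)
  then have "\<forall>\<^sub>F n in sequentially. stone \<sigma> (fst (A n)) (snd (A n)) > 1/2"
    by (rule order_tendstoD) simp
  then show ?thesis
    by eventually_elim (simp add: stone_sentence[OF assms(3)] split: if_splits)
qed

lemma standard_borel_singleton_sets:
  assumes "standard_borel M" "a \<in> space M"
  shows "{a} \<in> sets M"
proof -
  obtain T where T: "completely_metrizable_space T" "topspace T = space M"
      "sets M = sigma_sets (topspace T) {U. openin T U}"
    using assms(1) unfolding standard_borel_def by blast
  have "t1_space T"
    using T(1) by (simp add: completely_metrizable_imp_metrizable_space metrizable_imp_t1_space)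
  then have "closedin T {a}"
    using assms(2) T(2) by (simp add: closedin_t1_singleton)
  then have "topspace T - {a} \<in> sets M"
    using T(3) by auto
  then have "space M - (topspace T - {a}) \<in> sets M"
    by auto
  moreover have "space M - (topspace T - {a}) = {a}"
    using T(2) assms(2) by auto
  ultimately show ?thesis
    by simp
qed

lemma modeling_singleton_sets:
  assumes "modeling ar M I" "a \<in> space M"
  shows "{a} \<in> sets M"
proof (rule standard_borel_singleton_sets)
  show "standard_borel M"
    using assms(1) by (simp add: modeling_def relational_sample_space_def)
qed fact

lemma nvars_Eq_0_1: "nvars (Eq 0 1) = 2"
  unfolding nvars_def by (rule Least_equality) auto

lemma lessThan_2_eq: "{..<2} = {0, 1 :: nat}"
  by auto

lemma Omega_Eq_0_1: "Omega D I 2 (Eq 0 1) = {v \<in> PiE {0, 1} (\<lambda>_. D). v 0 = v 1}"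
  unfolding Omega_def lessThan_2_eq by simp

lemma stone_Eq_0_1:
  "stone (Eq 0 1) M I = measure (PiM {0, 1 :: nat} (\<lambda>_. M)) {v \<in> PiE {0, 1} (\<lambda>_. space M). v 0 = v 1}"
  unfolding stone_def nvars_Eq_0_1 Omega_Eq_0_1 lessThan_2_eq ..

lemma modeling_diagonal_sets:
  assumes "modeling ar M I"
  shows "{v \<in> PiE {0, 1 :: nat} (\<lambda>_. space M). v 0 = v 1} \<in> sets (PiM {0, 1} (\<lambda>_. M))"
proof -
  have "Omega (space M) I 2 (Eq 0 1) \<in> sets (PiM {..<2} (\<lambda>_. M))"
    using assms by (simp add: modeling_def relational_sample_space_def)
  then show ?thesis
    unfolding Omega_Eq_0_1 lessThan_2_eq .
qed

lemma sum_sq_atoms_le_stone_Eq_0_1: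
  assumes "modeling ar M I" "finite S" "S \<subseteq> space M"
  shows "(\<Sum>a\<in>S. measure M {a} ^ 2) \<le> stone (Eq 0 1) M I"
proof -
  interpret prob_space M
    using assms(1) by (simp add: modeling_def)
  interpret P: finite_product_prob_space "\<lambda>_. M" "{0, 1 :: nat}"
    by unfold_locales simp
  let ?pair = "\<lambda>a. PiE {0, 1 :: nat} (\<lambda>_. {a})"
  have atom_sets: "{a} \<in> sets M" if "a \<in> S" for a
    using modeling_singleton_sets[OF assms(1)] assms(3) that by blast
  have "measure (PiM {0, 1} (\<lambda>_. M)) (?pair a) = measure M {a} ^ 2" if "a \<in> S" for a
    using P.finite_measure_PiM_emb[of "\<lambda>_. {a}"] atom_sets[OF that]
    by (simp add: power2_eq_square)
  then have "(\<Sum>a\<in>S. measure M {a} ^ 2) = (\<Sum>a\<in>S. measure (PiM {0, 1} (\<lambda>_. M)) (?pair a))"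
    by simp
  also have "\<dots> = measure (PiM {0, 1} (\<lambda>_. M)) (\<Union>a\<in>S. ?pair a)"
  proof (rule P.finite_measure_finite_Union[symmetric])
    show "?pair ` S \<subseteq> sets (PiM {0, 1} (\<lambda>_. M))"
      using atom_sets by (blast intro: sets_PiM_I_finite)
    show "disjoint_family_on ?pair S"
      by (auto simp: disjoint_family_on_def dest: fun_cong[where x = 0])
  qed fact
  also have "\<dots> \<le> stone (Eq 0 1) M I"
    unfolding stone_Eq_0_1 using assms(3) modeling_diagonal_sets[OF assms(1)]
    by (intro P.finite_measure_mono) (auto simp: PiE_iff)
  finally show ?thesis .
qed

lemma stone_Eq_0_1_weakly_uniform:
  assumes "modeling ar M I" "weakly_uniform M" "a \<in> space M"
  shows "stone (Eq 0 1) M I = measure M {a}"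
proof -
  interpret prob_space M
    using assms(1) by (simp add: modeling_def)
  interpret P: finite_product_prob_space "\<lambda>_. M" "{0 :: nat}"
    by unfold_locales simp
  define D where "D = {v \<in> PiE {0, 1 :: nat} (\<lambda>_. space M). v 0 = v 1}"
  have pair_index: "{0, 1 :: nat} = insert 1 {0}"
    by auto
  have D_sets: "D \<in> sets (PiM (insert 1 {0}) (\<lambda>_. M))"
    using modeling_diagonal_sets[OF assms(1)] unfolding D_def pair_index .
  have fibre: "(\<integral>\<^sup>+y. indicator D (x(1 := y)) \<partial>M) = emeasure M {a}"
    if "x \<in> space (PiM {0} (\<lambda>_. M))" for x
  proof -
    have x: "x \<in> PiE {0} (\<lambda>_. space M)"
      using that unfolding space_PiM .
    have x0: "x 0 \<in> space M"
      using PiE_mem[OF x] by simp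
    have "x(1 := y) \<in> D \<longleftrightarrow> y = x 0" if "y \<in> space M" for y
      using x that by (auto simp: D_def PiE_iff extensional_def)
    then have "(\<integral>\<^sup>+y. indicator D (x(1 := y)) \<partial>M) = (\<integral>\<^sup>+y. indicator {x 0} y \<partial>M)"
      by (intro nn_integral_cong) (simp add: indicator_def)
    also have "\<dots> = emeasure M {x 0}"
      using modeling_singleton_sets[OF assms(1) x0] by simp
    also have "\<dots> = emeasure M {a}"
    proof -
      have "measure M {x 0} = measure M {a}"
        using assms(2,3) x0 unfolding weakly_uniform_def by blast
      then show ?thesis
        by (simp add: emeasure_eq_measure)
    qed
    finally show ?thesis .
  qed
  have "emeasure (PiM (insert 1 {0}) (\<lambda>_. M)) D = (\<integral>\<^sup>+x. indicator D x \<partial>PiM (insert 1 {0}) (\<lambda>_. M))"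
    using D_sets by simp
  also have "\<dots> = (\<integral>\<^sup>+x. (\<integral>\<^sup>+y. indicator D (x(1 := y)) \<partial>M) \<partial>PiM {0} (\<lambda>_. M))"
    using D_sets by (intro P.product_nn_integral_insert borel_measurable_indicator) simp_all
  also have "\<dots> = (\<integral>\<^sup>+x. emeasure M {a} \<partial>PiM {0 :: nat} (\<lambda>_. M))"
    by (rule nn_integral_cong) (rule fibre)
  also have "\<dots> = emeasure M {a}"
    by (simp add: P.emeasure_space_1)
  finally have "measure (PiM (insert 1 {0}) (\<lambda>_. M)) D = measure M {a}"
    by (simp add: measure_def)
  then show ?thesis
    unfolding stone_Eq_0_1 pair_index D_def .
qed

lemma (in prob_space) weakly_uniform_card_mult_le_1:
  assumes "weakly_uniform M" "finite S" "S \<subseteq> space M" "\<And>x. x \<in> S \<Longrightarrow> {x} \<in> events"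
    and "a \<in> space M"
  shows "card S * prob {a} \<le> 1"
proof -
  have "prob S = (\<Sum>x\<in>S. prob {x})"
    using assms(2,4) by (rule finite_measure_eq_sum_singleton)
  also have "\<dots> = (\<Sum>x\<in>S. prob {a})"
    using assms(1,3,5) unfolding weakly_uniform_def by (intro sum.cong refl) blast
  finally show ?thesis
    using prob_le_1[of S] by simp
qed

lemma eq_inverse_card_if_sum_sq_le:
  fixes p :: "'a \<Rightarrow> real"
  assumes "finite S" "b \<in> S" "(\<Sum>a\<in>S. p a) = 1" "(\<Sum>a\<in>S. p a ^ 2) \<le> 1 / card S"
  shows "p b = 1 / card S"
proof -
  define c where "c = 1 / card S"
  have "card S > 0"
    using assms(1,2) card_gt_0_iff by blast
  have "(\<Sum>a\<in>S. (p a - c) ^ 2) = (\<Sum>a\<in>S. p a ^ 2 - 2 * c * p a + c ^ 2)"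
    by (intro sum.cong) (simp_all add: power2_eq_square algebra_simps)
  also have "\<dots> = (\<Sum>a\<in>S. p a ^ 2) - 2 * c * (\<Sum>a\<in>S. p a) + card S * c ^ 2"
    by (simp add: sum.distrib sum_subtractf sum_distrib_left)
  also have "\<dots> \<le> 0"
    using assms(3,4) \<open>card S > 0\<close> by (simp add: c_def power2_eq_square)
  finally have "(\<Sum>a\<in>S. (p a - c) ^ 2) = 0"
    by (intro antisym sum_nonneg) simp_all
  then have "(p b - c) ^ 2 = 0"
    using sum_nonneg_eq_0_iff[of S "\<lambda>a. (p a - c) ^ 2"] assms(1,2) by simp
  then show ?thesis
    by (simp add: c_def)
qed

lemma modeling_X_limit_stone_Eq_0_1_le:
  assumes "FO0 ar \<subseteq> X" "Eq 0 1 \<in> X" "\<forall>n. weakly_uniform (fst (A n))"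
    and lim: "modeling_X_limit ar X A L J"
    and "finite S" "S \<subseteq> space L" "S \<noteq> {}"
  shows "stone (Eq 0 1) L J \<le> 1 / card S"
proof -
  have "card S > 0"
    using assms(5,7) card_gt_0_iff by blast
  then have "at_least (card S) \<in> X" "fv (at_least (card S)) = {}"
    using assms(1) at_least_FO0 fv_at_least by blast+
  moreover have "sat (space L) J (\<lambda>_. undefined) (at_least (card S))"
    using assms(5,6) by (auto simp: sat_at_least)
  ultimately have "\<forall>\<^sub>F n in sequentially.
      sat (space (fst (A n))) (snd (A n)) (\<lambda>_. undefined) (at_least (card S))"
    by (intro modeling_X_limit_sentence_eventually[OF lim])
  then have "\<forall>\<^sub>F n in sequentially. stone (Eq 0 1) (fst (A n)) (snd (A n)) \<le> 1 / card S"
  proof eventually_elim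
    case (elim n)
    then obtain T where T: "T \<subseteq> space (fst (A n))" "finite T" "card T = card S"
      by (auto simp: sat_at_least)
    then obtain a where a: "a \<in> T"
      using \<open>card S > 0\<close> by fastforce
    have model: "modeling ar (fst (A n)) (snd (A n))"
      using lim by (simp add: modeling_X_limit_def)
    then interpret prob_space "fst (A n)"
      by (simp add: modeling_def)
    have "card T * prob {a} \<le> 1"
      using T a assms(3) modeling_singleton_sets[OF model]
      by (intro weakly_uniform_card_mult_le_1) auto
    then show ?case
      using stone_Eq_0_1_weakly_uniform[OF model] assms(3) T a \<open>card S > 0\<close>
      by (auto simp: field_simps)
  qed
  moreover have "(\<lambda>n. stone (Eq 0 1) (fst (A n)) (snd (A n))) \<longlonglongrightarrow> stone (Eq 0 1) L J"
    using lim assms(2) by (simp add: modeling_X_limit_def)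
  ultimately show ?thesis
    by (intro tendsto_upperbound) auto
qed

lemma le_0_if_le_inverse_card:
  fixes x :: real
  assumes "infinite D" "\<And>S. finite S \<Longrightarrow> S \<subseteq> D \<Longrightarrow> S \<noteq> {} \<Longrightarrow> x \<le> 1 / card S"
  shows "x \<le> 0"
proof (rule LIMSEQ_le_const[OF lim_1_over_n], intro exI allI impI)
  fix n :: nat
  assume "1 \<le> n"
  then obtain S where "finite S" "card S = n" "S \<subseteq> D" "S \<noteq> {}"
    using infinite_arbitrarily_large[OF assms(1)] by (metis card.empty not_one_le_zero)
  then show "x \<le> 1 / real n"
    using assms(2) by blast
qed

lemma weakly_uniform_if_stone_Eq_0_1_le_0:
  assumes "modeling ar M I" "stone (Eq 0 1) M I \<le> 0"
  shows "weakly_uniform M"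
proof -
  have "measure M {a} ^ 2 \<le> 0" if "a \<in> space M" for a
  proof -
    have "measure M {a} ^ 2 \<le> stone (Eq 0 1) M I"
      using sum_sq_atoms_le_stone_Eq_0_1[OF assms(1), of "{a}"] that by simp
    then show ?thesis
      using assms(2) by (rule order_trans)
  qed
  then show ?thesis
    by (simp add: weakly_uniform_def)
qed

lemma weakly_uniform_if_stone_Eq_0_1_le_inverse_card:
  assumes "modeling ar M I" "finite (space M)" "stone (Eq 0 1) M I \<le> 1 / card (space M)"
  shows "weakly_uniform M"
proof -
  interpret prob_space M
    using assms(1) by (simp add: modeling_def)
  have "(\<Sum>a\<in>space M. prob {a}) = 1"
    using finite_measure_eq_sum_singleton[OF assms(2)] modeling_singleton_sets[OF assms(1)]
      prob_space by simp
  moreover have "(\<Sum>a\<in>space M. prob {a} ^ 2) \<le> 1 / card (space M)"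
    using sum_sq_atoms_le_stone_Eq_0_1[OF assms(1,2)] assms(3) by simp
  ultimately have "prob {b} = 1 / card (space M)" if "b \<in> space M" for b
    using eq_inverse_card_if_sum_sq_le[OF assms(2) that, of "\<lambda>a. prob {a}"] by simp
  then show ?thesis
    by (simp add: weakly_uniform_def)
qed

theorem lemma8p2:
  fixes ar :: "'r \<Rightarrow> nat"
    and X :: "'r fo set"
    and A :: "nat \<Rightarrow> 'a measure \<times> ('r \<Rightarrow> 'a list set)"
    and L :: "'b measure" and J :: "'r \<Rightarrow> 'b list set"
  assumes "X \<subseteq> FO ar"
    and "FO0 ar \<subseteq> X"
    and "Eq 0 1 \<in> X"
    and "\<forall>n. weakly_uniform (fst (A n))"
    and "modeling_X_limit ar X A L J"
  shows "weakly_uniform L"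
proof -
  have model: "modeling ar L J"
    using assms(5) by (simp add: modeling_X_limit_def)
  have bound: "stone (Eq 0 1) L J \<le> 1 / card S" if "finite S" "S \<subseteq> space L" "S \<noteq> {}" for S
    using modeling_X_limit_stone_Eq_0_1_le[OF assms(2-5) that] .
  show ?thesis
  proof (cases "finite (space L)")
    case True
    have "space L \<noteq> {}"
      using model by (simp add: modeling_def prob_space.not_empty)
    with True show ?thesis
      by (intro weakly_uniform_if_stone_Eq_0_1_le_inverse_card[OF model] bound) simp_all
  next
    case False
    then show ?thesis
      using bound by (intro weakly_uniform_if_stone_Eq_0_1_le_0[OF model] le_0_if_le_inverse_card)
  qed
qed

end
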